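(* Let $\eta>0$, $n\geq 2$, $G=(-\eta,1+\eta)\times\mathbb{R}^{n-1}$, $\pi:G\to(-\eta,1+\eta)$ the projection to the first coordinate, and $v_0:[0,1]\to G$, $v_0(t)=(t,0)$. For $v\in\Omega([0,1],G)$ write $a_v=\pi(v(0))$, $b_v=\pi(v(1))$. Then for every neighborhood $W_2$ of $v_0$ in $\Omega([0,1],G)$ there exists an open neighborhood $W_3\subseteq W_2$ of $v_0$ with the following property: for every $v\in W_3$ we have $a_v<b_v$ and there exists a section $\tilde v$ of $G|_{[a_v,b_v]}$, i.e. a map $\tilde v:[a_v,b_v]\to G$ of the form $\tilde v(s)=(s,\tilde u(s))$, which is a reparametrization of $v$, i.e. $v=\tilde v\circ\sigma$ for some $C^2$ diffeomorphism $\sigma:[0,1]\to[a_v,b_v]$ with $\sigma(0)=a_v$, $\sigma(1)=b_v$.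
   Context: $\Omega([0,1],G)$ denotes the space of $C^2$ immersions $[0,1]\to G$ with the $C^2$ topology. *)

theory Defs
  imports "HOL-Analysis.Analysis"
begin

definition C2_on :: "real set \<Rightarrow> (real \<Rightarrow> 'a::real_normed_vector) \<Rightarrow> bool" where
  "C2_on S f \<longleftrightarrow> (\<exists>f' f''. (\<forall>t\<in>S. (f has_vector_derivative f' t) (at t within S)
       \<and> (f' has_vector_derivative f'' t) (at t within S)) \<and> continuous_on S f'')"

definition C2_diffeo :: "real set \<Rightarrow> real set \<Rightarrow> (real \<Rightarrow> real) \<Rightarrow> bool" where
  "C2_diffeo S T \<sigma> \<longleftrightarrow> bij_betw \<sigma> S T \<and> C2_on S \<sigma> \<and> C2_on T (the_inv_into S \<sigma>)"

definition Omega :: "('a::real_normed_vector) set \<Rightarrow> (real \<Rightarrow> 'a) set" where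
  "Omega G = {v. C2_on {0..1} v \<and> (\<forall>t\<in>{0..1}. vector_derivative v (at t within {0..1}) \<noteq> 0)
                 \<and> v ` {0..1} \<subseteq> G}"

definition D1 :: "(real \<Rightarrow> 'a::real_normed_vector) \<Rightarrow> real \<Rightarrow> 'a" where
  "D1 v t = vector_derivative v (at t within {0..1})"

definition D2 :: "(real \<Rightarrow> 'a::real_normed_vector) \<Rightarrow> real \<Rightarrow> 'a" where
  "D2 v t = vector_derivative (D1 v) (at t within {0..1})"

definition C2_dist :: "(real \<Rightarrow> 'a::real_normed_vector) \<Rightarrow> (real \<Rightarrow> 'a) \<Rightarrow> real" where
  "C2_dist v w = (SUP t\<in>{0..1}. norm (v t - w t)) + (SUP t\<in>{0..1}. norm (D1 v t - D1 w t))
                 + (SUP t\<in>{0..1}. norm (D2 v t - D2 w t))"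

definition C2_nhd :: "(real \<Rightarrow> 'a::real_normed_vector) set \<Rightarrow> (real \<Rightarrow> 'a) set \<Rightarrow> (real \<Rightarrow> 'a) \<Rightarrow> bool" where
  "C2_nhd X W v0 \<longleftrightarrow> W \<subseteq> X \<and> v0 \<in> W \<and> (\<exists>e>0. \<forall>v\<in>X. C2_dist v v0 < e \<longrightarrow> v \<in> W)"

definition C2_open :: "(real \<Rightarrow> 'a::real_normed_vector) set \<Rightarrow> (real \<Rightarrow> 'a) set \<Rightarrow> bool" where
  "C2_open X W \<longleftrightarrow> W \<subseteq> X \<and> (\<forall>w\<in>W. \<exists>e>0. \<forall>v\<in>X. C2_dist v w < e \<longrightarrow> v \<in> W)"

end

theory Submission
  imports Defs
begin

(*
  On a C^2-ball of radius at most 1 about v0, the first component of the velocity differs by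
  less than 1 from its value 1 along v0, so it is positive. Then sigma = pi o v is C^2 with
  positive derivative, hence a C^2 diffeomorphism of [0,1] onto [a_v, b_v]: its inverse g has
  g' = 1 / (sigma' o g), whose derivative -(sigma'' o g) / (sigma' o g)^3 is again continuous.
  The section is v o g.
*)

lemma C2_on_D1_D2:
  fixes v :: "real \<Rightarrow> 'a::real_normed_vector"
  assumes "C2_on {0..1} v"
  shows "\<And>t. t \<in> {0..1} \<Longrightarrow> (v has_vector_derivative D1 v t) (at t within {0..1})"
    and "\<And>t. t \<in> {0..1} \<Longrightarrow> (D1 v has_vector_derivative D2 v t) (at t within {0..1})"
    and "continuous_on {0..1} (D2 v)"
proof -
  obtain v' v'' where v': "\<And>t. t \<in> {0..1} \<Longrightarrow> (v has_vector_derivative v' t) (at t within {0..1})"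
    and v'': "\<And>t. t \<in> {0..1} \<Longrightarrow> (v' has_vector_derivative v'' t) (at t within {0..1})"
    and cont: "continuous_on {0..1} v''"
    using assms unfolding C2_on_def by blast
  have D1_eq: "D1 v t = v' t" if "t \<in> {0..1}" for t
    unfolding D1_def using vector_derivative_within_cbox[of 0 1 t v] v'[OF that] that by simp
  have D1: "(D1 v has_vector_derivative v'' t) (at t within {0..1})" if "t \<in> {0..1}" for t
    using has_vector_derivative_transform[OF that _ v''[OF that]] D1_eq by simp
  have D2_eq: "D2 v t = v'' t" if "t \<in> {0..1}" for t
    unfolding D2_def using vector_derivative_within_cbox[of 0 1 t "D1 v"] D1[OF that] that by simp
  show "(v has_vector_derivative D1 v t) (at t within {0..1})" if "t \<in> {0..1}" for t
    using v' D1_eq that by simp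
  show "(D1 v has_vector_derivative D2 v t) (at t within {0..1})" if "t \<in> {0..1}" for t
    using D1 D2_eq that by simp
  show "continuous_on {0..1} (D2 v)"
    using continuous_on_eq[OF cont] D2_eq by simp
qed

lemma C2_on_continuous_D1_D2:
  fixes v :: "real \<Rightarrow> 'a::real_normed_vector"
  assumes "C2_on {0..1} v"
  shows "continuous_on {0..1} v" "continuous_on {0..1} (D1 v)" "continuous_on {0..1} (D2 v)"
proof -
  note D = C2_on_D1_D2[OF assms]
  show "continuous_on {0..1} v"
    by (rule continuous_on_vector_derivative) (rule D(1))
  show "continuous_on {0..1} (D1 v)"
    by (rule continuous_on_vector_derivative) (rule D(2))
  show "continuous_on {0..1} (D2 v)"
    by (rule D(3))
qed

lemma bdd_above_norm_diff_image:
  fixes f g :: "'b::topological_space \<Rightarrow> 'a::real_normed_vector"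
  assumes "compact S" "continuous_on S f" "continuous_on S g"
  shows "bdd_above ((\<lambda>t. norm (f t - g t)) ` S)"
proof -
  have "continuous_on S (\<lambda>t. norm (f t - g t))"
    using assms by (intro continuous_intros)
  then show ?thesis
    using assms(1) by (intro bounded_imp_bdd_above compact_imp_bounded compact_continuous_image)
qed

lemma norm_diff_le_SUP:
  fixes f g :: "'b::topological_space \<Rightarrow> 'a::real_normed_vector"
  assumes "compact S" "continuous_on S f" "continuous_on S g" "t \<in> S"
  shows "norm (f t - g t) \<le> (SUP t\<in>S. norm (f t - g t))"
  using assms by (intro cSUP_upper bdd_above_norm_diff_image)

lemma SUP_norm_diff_triangle:
  fixes f g h :: "'b::topological_space \<Rightarrow> 'a::real_normed_vector"
  assumes "compact S" "S \<noteq> {}" "continuous_on S f" "continuous_on S g" "continuous_on S h"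
  shows "(SUP t\<in>S. norm (f t - h t))
           \<le> (SUP t\<in>S. norm (f t - g t)) + (SUP t\<in>S. norm (g t - h t))"
proof (rule cSUP_least[OF \<open>S \<noteq> {}\<close>])
  fix t assume "t \<in> S"
  have "norm (f t - h t) \<le> norm (f t - g t) + norm (g t - h t)"
    using norm_triangle_ineq[of "f t - g t" "g t - h t"] by simp
  also have "\<dots> \<le> (SUP t\<in>S. norm (f t - g t)) + (SUP t\<in>S. norm (g t - h t))"
    using assms \<open>t \<in> S\<close> by (intro add_mono norm_diff_le_SUP)
  finally show "norm (f t - h t) \<le> \<dots>" .
qed

lemma C2_dist_self: "C2_dist v v = 0"
  unfolding C2_dist_def by (simp del: atLeastAtMost_iff)

lemma C2_dist_triangle:
  fixes u v w :: "real \<Rightarrow> 'a::real_normed_vector"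
  assumes "C2_on {0..1} u" "C2_on {0..1} v" "C2_on {0..1} w"
  shows "C2_dist u w \<le> C2_dist u v + C2_dist v w"
proof -
  note cont = C2_on_continuous_D1_D2[OF assms(1)] C2_on_continuous_D1_D2[OF assms(2)]
    C2_on_continuous_D1_D2[OF assms(3)]
  have "{0..1::real} \<noteq> {}" by simp
  note triangle = SUP_norm_diff_triangle[OF compact_Icc this]
  show ?thesis
    unfolding C2_dist_def
    using triangle[OF cont(1,4,7)] triangle[OF cont(2,5,8)] triangle[OF cont(3,6,9)] by linarith
qed

lemma norm_D1_diff_le_C2_dist:
  fixes v w :: "real \<Rightarrow> 'a::real_normed_vector"
  assumes "C2_on {0..1} v" "C2_on {0..1} w" "t \<in> {0..1}"
  shows "norm (D1 v t - D1 w t) \<le> C2_dist v w"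
proof -
  note cont = C2_on_continuous_D1_D2[OF assms(1)] C2_on_continuous_D1_D2[OF assms(2)]
  have "0 \<in> {0..1::real}" by simp
  note le_SUP = norm_diff_le_SUP[OF compact_Icc]
  have "0 \<le> (SUP t\<in>{0..1}. norm (v t - w t))"
    using order_trans[OF norm_ge_zero le_SUP[OF cont(1,4) \<open>0 \<in> {0..1}\<close>]] .
  moreover have "0 \<le> (SUP t\<in>{0..1}. norm (D2 v t - D2 w t))"
    using order_trans[OF norm_ge_zero le_SUP[OF cont(3,6) \<open>0 \<in> {0..1}\<close>]] .
  moreover have "norm (D1 v t - D1 w t) \<le> (SUP t\<in>{0..1}. norm (D1 v t - D1 w t))"
    using le_SUP[OF cont(2,5) assms(3)] .
  ultimately show ?thesis
    unfolding C2_dist_def by linarith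
qed

lemma C2_open_C2_ball:
  assumes "X \<subseteq> Collect (C2_on {0..1})" "C2_on {0..1} w"
  shows "C2_open X {v \<in> X. C2_dist v w < e}"
  unfolding C2_open_def
proof (intro conjI ballI)
  fix u assume u: "u \<in> {v \<in> X. C2_dist v w < e}"
  show "\<exists>d>0. \<forall>v\<in>X. C2_dist v u < d \<longrightarrow> v \<in> {v \<in> X. C2_dist v w < e}"
  proof (intro exI[of _ "e - C2_dist u w"] conjI ballI impI)
    fix v assume "v \<in> X" "C2_dist v u < e - C2_dist u w"
    moreover have "C2_dist v w \<le> C2_dist v u + C2_dist u w"
      using \<open>v \<in> X\<close> u assms by (intro C2_dist_triangle) auto
    ultimately show "v \<in> {v \<in> X. C2_dist v w < e}" by simp
  qed (use u in simp)
qed auto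

lemma C2_on_Pair_id_const: "C2_on S (\<lambda>t. (t, c))"
  unfolding C2_on_def
  by (intro exI[of _ "\<lambda>_. (1, 0)"] exI[of _ "\<lambda>_. 0"])
    (auto intro!: has_vector_derivative_Pair has_vector_derivative_id has_vector_derivative_const)

lemma D1_Pair_id_const:
  fixes c :: "'a::real_normed_vector"
  assumes "t \<in> {0..1}"
  shows "D1 (\<lambda>t. (t, c)) t = (1, 0)"
proof -
  have "((\<lambda>t. (t, c)) has_vector_derivative (1, 0)) (at t within {0..1})"
    by (intro has_vector_derivative_Pair has_vector_derivative_id has_vector_derivative_const)
  then have "vector_derivative (\<lambda>t. (t, c)) (at t within cbox 0 1) = (1, 0)"
    by (intro vector_derivative_within_cbox) (use assms in auto)
  then show ?thesis
    by (simp add: D1_def)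
qed

lemma fst_D1_pos_if_C2_dist_Pair_id_less_one:
  fixes v :: "real \<Rightarrow> real \<times> 'a::real_normed_vector"
  assumes "C2_on {0..1} v" "C2_dist v (\<lambda>t. (t, c)) < 1" "t \<in> {0..1}"
  shows "0 < fst (D1 v t)"
proof -
  let ?w = "\<lambda>t. (t, c)"
  have "D1 ?w t = (1, 0)"
    using assms(3) by (rule D1_Pair_id_const)
  then have "\<bar>fst (D1 v t) - 1\<bar> \<le> norm (D1 v t - D1 ?w t)"
    using norm_fst_le[of "fst (D1 v t - D1 ?w t)" "snd (D1 v t - D1 ?w t)", unfolded prod.collapse]
    by simp
  also have "\<dots> \<le> C2_dist v ?w"
    using assms(1) C2_on_Pair_id_const assms(3) by (rule norm_D1_diff_le_C2_dist)
  finally show ?thesis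
    using assms(2) by (simp add: abs_le_iff)
qed

lemma strict_mono_on_if_has_real_derivative_pos:
  fixes f f' :: "real \<Rightarrow> real"
  assumes f': "\<And>t. t \<in> {a..b} \<Longrightarrow> (f has_real_derivative f' t) (at t within {a..b})"
    and pos: "\<And>t. t \<in> {a..b} \<Longrightarrow> 0 < f' t"
  shows "strict_mono_on {a..b} f"
proof (rule strict_mono_onI)
  fix x y assume xy: "x \<in> {a..b}" "y \<in> {a..b}" "x < y"
  show "f x < f y"
  proof (rule DERIV_pos_imp_increasing_open[OF \<open>x < y\<close>])
    fix z assume "x < z" "z < y"
    with xy have z: "z \<in> {a..b}" "at z within {a..b} = at z"
      by (auto intro: at_within_Icc_at)
    show "\<exists>d. DERIV f z :> d \<and> 0 < d"
      using f'[OF z(1)] pos[OF z(1)] z(2) by auto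
  next
    show "continuous_on {x..y} f"
      using continuous_on_subset[OF DERIV_continuous_on[OF f']] xy by auto
  qed
qed

lemma mono_on_continuous_image_Icc:
  fixes f :: "'a::linear_continuum_topology \<Rightarrow> 'b::linorder_topology"
  assumes "a \<le> b" "mono_on {a..b} f" "continuous_on {a..b} f"
  shows "f ` {a..b} = {f a..f b}"
proof
  show "f ` {a..b} \<subseteq> {f a..f b}"
    using assms(1) mono_onD[OF assms(2)] by fastforce
  show "{f a..f b} \<subseteq> f ` {a..b}"
    using IVT'[of f a _ b] assms(1,3) by fastforce
qed

lemma the_inv_into_has_real_derivative:
  fixes f :: "real \<Rightarrow> real"
  assumes "compact S" "inj_on f S" "continuous_on S f" "x \<in> S"
    and "(f has_real_derivative f') (at x within S)" "f' \<noteq> 0"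
  shows "(the_inv_into S f has_real_derivative inverse f') (at (f x) within f ` S)"
proof -
  have "continuous_on (f ` S) (the_inv_into S f)"
    using continuous_on_inv[OF assms(3,1)] the_inv_into_f_f[OF assms(2)] by blast
  then have "continuous (at (f x) within f ` S) (the_inv_into S f)"
    using assms(4) by (simp add: continuous_on_eq_continuous_within)
  then have "(the_inv_into S f has_derivative (*) (inverse f')) (at (f x) within f ` S)"
    using assms(5) \<open>f' \<noteq> 0\<close> the_inv_into_f_f[OF assms(2)] \<open>x \<in> S\<close>
    by (intro has_derivative_inverse_within[where f' = "(*) f'"])
      (auto simp: has_field_derivative_def fun_eq_iff)
  then show ?thesis
    by (simp add: has_field_derivative_def)
qed

lemma C2_on_real_iff:
  fixes f :: "real \<Rightarrow> real"
  shows "C2_on S f \<longleftrightarrow> (\<exists>f' f''. (\<forall>t\<in>S. (f has_real_derivative f' t) (at t within S)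
           \<and> (f' has_real_derivative f'' t) (at t within S)) \<and> continuous_on S f'')"
  unfolding C2_on_def has_real_derivative_iff_has_vector_derivative ..

lemma bij_betw_Icc_if_has_real_derivative_pos:
  fixes f f' :: "real \<Rightarrow> real"
  assumes "a \<le> b"
    and f': "\<And>t. t \<in> {a..b} \<Longrightarrow> (f has_real_derivative f' t) (at t within {a..b})"
    and pos: "\<And>t. t \<in> {a..b} \<Longrightarrow> 0 < f' t"
  shows "bij_betw f {a..b} {f a..f b}"
proof -
  have mono: "strict_mono_on {a..b} f"
    using f' pos by (rule strict_mono_on_if_has_real_derivative_pos)
  have "f ` {a..b} = {f a..f b}"
    using \<open>a \<le> b\<close> strict_mono_on_imp_mono_on[OF mono] DERIV_continuous_on[OF f']
    by (rule mono_on_continuous_image_Icc)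
  then show ?thesis
    unfolding bij_betw_def using strict_mono_on_imp_inj_on[OF mono] by blast
qed

lemma the_inv_into_Icc_has_real_derivative:
  fixes f f' :: "real \<Rightarrow> real"
  assumes "a \<le> b"
    and f': "\<And>t. t \<in> {a..b} \<Longrightarrow> (f has_real_derivative f' t) (at t within {a..b})"
    and pos: "\<And>t. t \<in> {a..b} \<Longrightarrow> 0 < f' t"
    and "s \<in> {f a..f b}"
  shows "(the_inv_into {a..b} f has_real_derivative inverse (f' (the_inv_into {a..b} f s)))
           (at s within {f a..f b})"
proof -
  have bij: "bij_betw f {a..b} {f a..f b}"
    using \<open>a \<le> b\<close> f' pos by (rule bij_betw_Icc_if_has_real_derivative_pos)
  have t: "the_inv_into {a..b} f s \<in> {a..b}"
    using bij_betwE[OF bij_betw_the_inv_into[OF bij]] \<open>s \<in> {f a..f b}\<close> by blast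
  show ?thesis
    using the_inv_into_has_real_derivative[OF compact_Icc bij_betw_imp_inj_on[OF bij]
        DERIV_continuous_on[OF f'] t f'[OF t]]
      pos[OF t] f_the_inv_into_f_bij_betw[OF bij \<open>s \<in> {f a..f b}\<close>] bij_betw_imp_surj_on[OF bij]
    by simp
qed

lemma C2_on_the_inv_into_Icc:
  fixes f f' f'' :: "real \<Rightarrow> real"
  assumes "a \<le> b"
    and f': "\<And>t. t \<in> {a..b} \<Longrightarrow> (f has_real_derivative f' t) (at t within {a..b})"
    and f'': "\<And>t. t \<in> {a..b} \<Longrightarrow> (f' has_real_derivative f'' t) (at t within {a..b})"
    and cont_f'': "continuous_on {a..b} f''"
    and pos: "\<And>t. t \<in> {a..b} \<Longrightarrow> 0 < f' t"
  shows "C2_on {f a..f b} (the_inv_into {a..b} f)"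
proof -
  define g where "g = the_inv_into {a..b} f"
  have g': "(g has_real_derivative inverse (f' (g s))) (at s within {f a..f b})"
    if "s \<in> {f a..f b}" for s
    unfolding g_def using assms(1) f' pos that by (rule the_inv_into_Icc_has_real_derivative)
  have g_img: "g ` {f a..f b} = {a..b}"
    using bij_betw_Icc_if_has_real_derivative_pos[OF \<open>a \<le> b\<close> f' pos]
    unfolding g_def by (metis bij_betw_def bij_betw_the_inv_into)
  then have g_in: "g s \<in> {a..b}" if "s \<in> {f a..f b}" for s
    using that by blast
  have g'': "((\<lambda>s. inverse (f' (g s))) has_real_derivative - f'' (g s) / f' (g s) ^ 3)
      (at s within {f a..f b})" if "s \<in> {f a..f b}" for s
  proof -
    have "((f' \<circ> g) has_vector_derivative inverse (f' (g s)) *\<^sub>R f'' (g s))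
        (at s within {f a..f b})"
      using g'[OF that] f''[OF g_in[OF that]] g_img
      by (intro vector_diff_chain_within) (auto simp: has_real_derivative_iff_has_vector_derivative)
    then have "((\<lambda>s. f' (g s)) has_real_derivative f'' (g s) / f' (g s)) (at s within {f a..f b})"
      by (simp add: has_real_derivative_iff_has_vector_derivative o_def divide_inverse mult.commute)
    from DERIV_inverse_fun[OF this] show ?thesis
      using pos[OF g_in[OF that]] by (simp add: field_simps power3_eq_cube power2_eq_square)
  qed
  have "f' (g s) \<noteq> 0" if "s \<in> {f a..f b}" for s
    using pos[OF g_in[OF that]] by simp
  then have "continuous_on {f a..f b} (\<lambda>s. - f'' (g s) / f' (g s) ^ 3)"
    using DERIV_continuous_on[OF g'] DERIV_continuous_on[OF f''] cont_f'' g_img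
    by (intro continuous_intros continuous_on_compose2[where g = f' and f = g]
        continuous_on_compose2[where g = f'' and f = g]) auto
  then show ?thesis
    unfolding C2_on_real_iff g_def[symmetric] using g' g''
    by (intro exI[of _ "\<lambda>s. inverse (f' (g s))"] exI[of _ "\<lambda>s. - f'' (g s) / f' (g s) ^ 3"])
      simp
qed

lemma C2_diffeo_if_has_real_derivative_pos:
  fixes f f' f'' :: "real \<Rightarrow> real"
  assumes "a \<le> b"
    and f': "\<And>t. t \<in> {a..b} \<Longrightarrow> (f has_real_derivative f' t) (at t within {a..b})"
    and f'': "\<And>t. t \<in> {a..b} \<Longrightarrow> (f' has_real_derivative f'' t) (at t within {a..b})"
    and "continuous_on {a..b} f''"
    and pos: "\<And>t. t \<in> {a..b} \<Longrightarrow> 0 < f' t"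
  shows "C2_diffeo {a..b} {f a..f b} f"
proof -
  have "C2_on {a..b} f"
    unfolding C2_on_real_iff using assms by (intro exI[of _ f'] exI[of _ f'']) simp
  then show ?thesis
    unfolding C2_diffeo_def
    using bij_betw_Icc_if_has_real_derivative_pos[OF \<open>a \<le> b\<close> f' pos] C2_on_the_inv_into_Icc[OF assms]
    by blast
qed

lemma has_vector_derivative_fst:
  "(f has_vector_derivative f') F \<Longrightarrow> ((\<lambda>x. fst (f x)) has_vector_derivative fst f') F"
  unfolding has_vector_derivative_def by (drule has_derivative_fst) simp

lemma C2_diffeo_fst:
  fixes v :: "real \<Rightarrow> real \<times> 'a::real_normed_vector"
  assumes "C2_on {0..1} v" "\<And>t. t \<in> {0..1} \<Longrightarrow> 0 < fst (D1 v t)"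
  shows "C2_diffeo {0..1} {fst (v 0)..fst (v 1)} (\<lambda>t. fst (v t))"
proof (rule C2_diffeo_if_has_real_derivative_pos)
  note D = C2_on_D1_D2[OF assms(1)]
  show "((\<lambda>t. fst (v t)) has_real_derivative fst (D1 v t)) (at t within {0..1})"
    and "((\<lambda>t. fst (D1 v t)) has_real_derivative fst (D2 v t)) (at t within {0..1})"
    if "t \<in> {0..1}" for t
    using has_vector_derivative_fst[OF D(1)[OF that]] has_vector_derivative_fst[OF D(2)[OF that]]
    by (simp_all add: has_real_derivative_iff_has_vector_derivative)
  show "continuous_on {0..1} (\<lambda>t. fst (D2 v t))"
    using D(3) by (intro continuous_intros)
qed (use assms(2) in auto)

lemma graph_reparametrization:
  fixes v :: "real \<Rightarrow> real \<times> 'a::real_normed_vector"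
  assumes "C2_on {0..1} v" "\<And>t. t \<in> {0..1} \<Longrightarrow> 0 < fst (D1 v t)" "v ` {0..1} \<subseteq> G"
  shows "fst (v 0) < fst (v 1) \<and>
    (\<exists>vt \<sigma>. (\<forall>s\<in>{fst (v 0)..fst (v 1)}. vt s \<in> G \<and> fst (vt s) = s)
      \<and> C2_diffeo {0..1} {fst (v 0)..fst (v 1)} \<sigma>
      \<and> \<sigma> 0 = fst (v 0) \<and> \<sigma> 1 = fst (v 1)
      \<and> (\<forall>t\<in>{0..1}. v t = vt (\<sigma> t)))"
proof -
  define \<sigma> where "\<sigma> = (\<lambda>t. fst (v t))"
  define vt where "vt = (\<lambda>s. v (the_inv_into {0..1} \<sigma> s))"
  have diffeo: "C2_diffeo {0..1} {\<sigma> 0..\<sigma> 1} \<sigma>"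
    unfolding \<sigma>_def using assms(1,2) by (rule C2_diffeo_fst)
  then have bij: "bij_betw \<sigma> {0..1} {\<sigma> 0..\<sigma> 1}"
    unfolding C2_diffeo_def by blast
  have "\<sigma> 0 \<noteq> \<sigma> 1"
    using bij_betw_imp_inj_on[OF bij] by (auto dest: inj_onD)
  moreover have "\<sigma> 1 \<in> {\<sigma> 0..\<sigma> 1}"
    using bij_betwE[OF bij] by simp
  ultimately have "\<sigma> 0 < \<sigma> 1" by simp
  moreover have "vt s \<in> G" "fst (vt s) = s" if "s \<in> {\<sigma> 0..\<sigma> 1}" for s
    using bij_betwE[OF bij_betw_the_inv_into[OF bij]] f_the_inv_into_f_bij_betw[OF bij] that assms(3)
    unfolding vt_def \<sigma>_def by auto
  moreover have "vt (\<sigma> t) = v t" if "t \<in> {0..1}" for t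
    unfolding vt_def using the_inv_into_f_f[OF bij_betw_imp_inj_on[OF bij] that] by simp
  ultimately show ?thesis
    using diffeo unfolding \<sigma>_def
    by (intro conjI exI[of _ vt] exI[of _ "\<lambda>t. fst (v t)"] ballI) simp_all
qed

theorem proposition2p4:
  fixes \<eta> :: real and G :: "(real \<times> (real ^ 'm)) set" and v0 :: "real \<Rightarrow> real \<times> (real ^ 'm)"
    and W2 :: "(real \<Rightarrow> real \<times> (real ^ 'm)) set"
  assumes "\<eta> > 0"
    and "G = {p. - \<eta> < fst p \<and> fst p < 1 + \<eta>}"
    and "v0 = (\<lambda>t. (t, 0))"
    and "C2_nhd (Omega G) W2 v0"
  shows "\<exists>W3. C2_open (Omega G) W3 \<and> v0 \<in> W3 \<and> W3 \<subseteq> W2 \<and>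
           (\<forall>v\<in>W3. fst (v 0) < fst (v 1) \<and>
              (\<exists>vt \<sigma>. (\<forall>s\<in>{fst (v 0)..fst (v 1)}. vt s \<in> G \<and> fst (vt s) = s)
                  \<and> C2_diffeo {0..1} {fst (v 0)..fst (v 1)} \<sigma>
                  \<and> \<sigma> 0 = fst (v 0) \<and> \<sigma> 1 = fst (v 1)
                  \<and> (\<forall>t\<in>{0..1}. v t = vt (\<sigma> t))))"
proof -
  obtain e where "e > 0" and W2: "v0 \<in> Omega G" "\<And>v. v \<in> Omega G \<Longrightarrow> C2_dist v v0 < e \<Longrightarrow> v \<in> W2"
    using assms(4) unfolding C2_nhd_def by blast
  define W3 where "W3 = {v \<in> Omega G. C2_dist v v0 < min e 1}"
  have C2: "C2_on {0..1} v" and image_G: "v ` {0..1} \<subseteq> G" if "v \<in> W3" for v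
    using that unfolding W3_def Omega_def by auto
  have pos: "0 < fst (D1 v t)" if "v \<in> W3" "t \<in> {0..1}" for v t
    using fst_D1_pos_if_C2_dist_Pair_id_less_one[of v 0 t] C2 that
    unfolding W3_def assms(3) by simp
  show ?thesis
  proof (intro exI[of _ W3] graph_reparametrization conjI ballI)
    show "C2_open (Omega G) W3"
      unfolding W3_def Omega_def assms(3) using C2_on_Pair_id_const by (intro C2_open_C2_ball) auto
    show "v0 \<in> W3"
      unfolding W3_def using W2(1) \<open>e > 0\<close> by (simp add: C2_dist_self)
    show "W3 \<subseteq> W2"
      unfolding W3_def using W2(2) by auto
  qed (simp_all add: C2 pos image_G)
qed

end
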